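(* Let $n,M\ge1$ be integers, $\mathcal X=\{x^{(1)},\dots,x^{(L)}\}\subset\mathbb C$ a set of $L$ channel input symbols, $\sigma^2>0$, $g:\mathbb C\to[0,+\infty]$ measurable, $\epsilon>0$, $B\in\mathbb R$, $\delta<1$. Let $\mathscr C$ be a homogeneous $(n,M,\epsilon,B,\delta)$-code (as defined in the context) with information rate $R=\frac{\log_2M}{n}$; let $p_\ell=\int_{\mathcal E_\ell}f_{Y|X}(y|x^{(\ell)})dy$, assume $\sum_jp_j>0$, and let $Q(x^{(\ell)})=p_\ell/\sum_{j=1}^Lp_j$. Then: (i) $R\le H_2(P_{\mathscr C})+\frac1{n^2}\Big(\frac1{12}-\sum_{\ell=1}^L\frac1{12P_{\mathscr C}(x^{(\ell)})+1}\Big)+\frac1n\Big(\log_2\sqrt{2\pi}-\sum_{\ell=1}^L\log_2\sqrt{2\pi P_{\mathscr C}(x^{(\ell)})}\Big)-\frac{\log_2 n}{n}\cdot\frac{L-1}{2}$; (ii) $B\le\frac1{1-\delta}\sum_{\ell=1}^LP_{\mathscr C}(x^{(\ell)})\,\mathbb E\big[g(x^{(\ell)}+W)\big]$, where $W$ is a complex circularly symmetric Gaussian random variable whose real and imaginary parts have zero means and variances $\sigma^2/2$; (iii) $\epsilon\ge1-\exp\Big(-nH(P_{\mathscr C})-nD(P_{\mathscr C}\|Q)+n\ln\sum_{j=1}^Lp_j\Big)$.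
   Context: $H_2(P)=-\sum_xP(x)\log_2P(x)$ (with $\log_2 0=-\infty$); in (iii) $H(P)=-\sum_xP(x)\ln P(x)$ and $D(P\|Q)=\sum_xP(x)\ln\frac{P(x)}{Q(x)}$. Channel: outputs $\boldsymbol Y=\boldsymbol x+\boldsymbol N_1$, $\boldsymbol Z=\boldsymbol x+\boldsymbol N_2$, all noise components i.i.d. complex circularly symmetric Gaussian with real and imaginary parts of zero mean and variance $\sigma^2/2$; $f_{Y|X}(y|x)=\frac1{\pi\sigma^2}\exp(-|y-x|^2/\sigma^2)$, $f_{\boldsymbol Y|\boldsymbol X}(\boldsymbol y|\boldsymbol x)=\prod_tf_{Y|X}(y_t|x_t)$ (same for $\boldsymbol Z$). An $(n,M)$-code is $\mathscr C=\{(\boldsymbol u(i),\mathcal D_i)\}_{i=1}^M$ with $\boldsymbol u(i)\in\mathcal X^n$, $|u_t(i)|\le P$ for a fixed $P>0$, pairwise disjoint measurable $\mathcal D_i\subseteq\mathbb C^n$, $M\le2^{n\lfloor\log_2L\rfloor}$; decoding sets are of product form $\mathcal D_i=\mathcal D_{i,1}\times\cdots\times\mathcal D_{i,n}$, $\mathcal D_{i,t}\subseteq\mathbb C$ measurable. $\gamma_i(\mathscr C)=1-\int_{\mathcal D_i}f_{\boldsymbol Y|\boldsymbol X}(\boldsymbol y|\boldsymbol u(i))d\boldsymbol y$, $\gamma=\frac1M\sum_i\gamma_i$; $(n,M,\epsilon)$-code: $\gamma<\epsilon$. With $\bar g(\boldsymbol z)=\frac1n\sum_tg(z_t)$, $\theta_i=\Pr[\bar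 g(\boldsymbol Z)<B\mid\boldsymbol X=\boldsymbol u(i)]$, $\theta=\frac1M\sum_i\theta_i$; $(n,M,\epsilon,B,\delta)$-code: $(n,M,\epsilon)$-code with $\theta<\delta$. Types: $P_{\boldsymbol u(i)}(x^{(\ell)})=\frac1n\#\{t:u_t(i)=x^{(\ell)}\}$, $P_{\mathscr C}=\frac1M\sum_iP_{\boldsymbol u(i)}$. For each $\ell$, $\mathcal E_\ell=\mathcal D_{i^\star,t^\star}$ where $(i^\star,t^\star)$ minimizes $\int_{\mathcal D_{i,t}}f_{Y|X}(y|x^{(\ell)})dy$ over $\{1,\dots,M\}\times\{1,\dots,n\}$. The code is homogeneous if $P_{\boldsymbol u(i)}=P_{\mathscr C}$ for every $i$, and $\mathcal D_{i,t}=\mathcal E_\ell$ whenever $u_t(i)=x^{(\ell)}$. *)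

theory Defs
  imports "HOL-Analysis.Analysis"
begin

text \<open>Conventions: codewords, positions and symbols are indexed from 0:
  codeword i < M, time t < n, symbol index l < L with symbols x l.
  Codeword i is the function u i :: nat \<Rightarrow> complex (u i t = u_t(i)),
  the decoding set of codeword i is the product of the sets D i t, t < n.\<close>

text \<open>Channel transition density f_{Y|X}(y|x), with s2 = sigma^2.\<close>
definition fYX :: "real \<Rightarrow> complex \<Rightarrow> complex \<Rightarrow> real" where
  "fYX s2 y x = exp (- (cmod (y - x))\<^sup>2 / s2) / (pi * s2)"

definition chan1 :: "real \<Rightarrow> complex \<Rightarrow> complex measure" where
  "chan1 s2 x = density lborel (\<lambda>y. ennreal (fYX s2 y x))"

definition noiseW :: "real \<Rightarrow> complex measure" where
  "noiseW s2 = chan1 s2 0"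

definition chanN :: "real \<Rightarrow> nat \<Rightarrow> (nat \<Rightarrow> complex) \<Rightarrow> (nat \<Rightarrow> complex) measure" where
  "chanN s2 n v = density (PiM {..<n} (\<lambda>_. lborel)) (\<lambda>y. ennreal (\<Prod>t<n. fYX s2 (y t) (v t)))"

definition wtype :: "nat \<Rightarrow> (nat \<Rightarrow> complex) \<Rightarrow> complex \<Rightarrow> real" where
  "wtype n v a = real (card {t. t < n \<and> v t = a}) / real n"

definition ctype :: "nat \<Rightarrow> nat \<Rightarrow> (nat \<Rightarrow> nat \<Rightarrow> complex) \<Rightarrow> complex \<Rightarrow> real" where
  "ctype n M u a = (\<Sum>i<M. wtype n (u i) a) / real M"

definition is_code :: "nat \<Rightarrow> nat \<Rightarrow> nat \<Rightarrow> (nat \<Rightarrow> complex) \<Rightarrow> real \<Rightarrow>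
    (nat \<Rightarrow> nat \<Rightarrow> complex) \<Rightarrow> (nat \<Rightarrow> nat \<Rightarrow> complex set) \<Rightarrow> bool" where
  "is_code n M L x A u D \<longleftrightarrow>
     (\<forall>i<M. \<forall>t<n. u i t \<in> x ` {..<L} \<and> cmod (u i t) \<le> A) \<and>
     (\<forall>i<M. \<forall>t<n. D i t \<in> sets lborel) \<and>
     (\<forall>i<M. \<forall>j<M. i \<noteq> j \<longrightarrow> PiE {..<n} (D i) \<inter> PiE {..<n} (D j) = {}) \<and>
     M \<le> 2 ^ (n * nat \<lfloor>log 2 (real L)\<rfloor>)"

definition err_i :: "real \<Rightarrow> nat \<Rightarrow> (nat \<Rightarrow> nat \<Rightarrow> complex) \<Rightarrow> (nat \<Rightarrow> nat \<Rightarrow> complex set) \<Rightarrow> nat \<Rightarrow> real" where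
  "err_i s2 n u D i = 1 - measure (chanN s2 n (u i)) (PiE {..<n} (D i))"

definition err :: "real \<Rightarrow> nat \<Rightarrow> nat \<Rightarrow> (nat \<Rightarrow> nat \<Rightarrow> complex) \<Rightarrow> (nat \<Rightarrow> nat \<Rightarrow> complex set) \<Rightarrow> real" where
  "err s2 n M u D = (\<Sum>i<M. err_i s2 n u D i) / real M"

definition theta_i :: "real \<Rightarrow> nat \<Rightarrow> (complex \<Rightarrow> ennreal) \<Rightarrow> real \<Rightarrow> (nat \<Rightarrow> nat \<Rightarrow> complex) \<Rightarrow> nat \<Rightarrow> real" where
  "theta_i s2 n g B u i = measure (chanN s2 n (u i))
     {z \<in> space (chanN s2 n (u i)). enn2ereal ((\<Sum>t<n. g (z t)) / of_nat n) < ereal B}"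

definition theta :: "real \<Rightarrow> nat \<Rightarrow> nat \<Rightarrow> (complex \<Rightarrow> ennreal) \<Rightarrow> real \<Rightarrow> (nat \<Rightarrow> nat \<Rightarrow> complex) \<Rightarrow> real" where
  "theta s2 n M g B u = (\<Sum>i<M. theta_i s2 n g B u i) / real M"

definition is_code_full :: "real \<Rightarrow> nat \<Rightarrow> nat \<Rightarrow> nat \<Rightarrow> (nat \<Rightarrow> complex) \<Rightarrow> real \<Rightarrow>
    (complex \<Rightarrow> ennreal) \<Rightarrow> real \<Rightarrow> real \<Rightarrow> real \<Rightarrow>
    (nat \<Rightarrow> nat \<Rightarrow> complex) \<Rightarrow> (nat \<Rightarrow> nat \<Rightarrow> complex set) \<Rightarrow> bool" where
  "is_code_full s2 n M L x A g eps B del u D \<longleftrightarrow>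
     is_code n M L x A u D \<and> err s2 n M u D < eps \<and> theta s2 n M g B u < del"

definition Eset :: "real \<Rightarrow> nat \<Rightarrow> nat \<Rightarrow> (nat \<Rightarrow> complex) \<Rightarrow> (nat \<Rightarrow> nat \<Rightarrow> complex set) \<Rightarrow> nat \<Rightarrow> complex set" where
  "Eset s2 n M x D l = (SOME E. \<exists>i<M. \<exists>t<n. E = D i t \<and>
      (\<forall>i'<M. \<forall>t'<n. measure (chan1 s2 (x l)) (D i t) \<le> measure (chan1 s2 (x l)) (D i' t')))"

definition homogeneous :: "real \<Rightarrow> nat \<Rightarrow> nat \<Rightarrow> nat \<Rightarrow> (nat \<Rightarrow> complex) \<Rightarrow>
    (nat \<Rightarrow> nat \<Rightarrow> complex) \<Rightarrow> (nat \<Rightarrow> nat \<Rightarrow> complex set) \<Rightarrow> bool" where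
  "homogeneous s2 n M L x u D \<longleftrightarrow>
     (\<forall>i<M. \<forall>l<L. wtype n (u i) (x l) = ctype n M u (x l)) \<and>
     (\<forall>i<M. \<forall>t<n. \<forall>l<L. u i t = x l \<longrightarrow> D i t = Eset s2 n M x D l)"

definition H2 :: "nat \<Rightarrow> (nat \<Rightarrow> real) \<Rightarrow> real" where
  "H2 L q = - (\<Sum>l<L. if q l = 0 then 0 else q l * log 2 (q l))"

definition Hln :: "nat \<Rightarrow> (nat \<Rightarrow> real) \<Rightarrow> real" where
  "Hln L q = - (\<Sum>l<L. if q l = 0 then 0 else q l * ln (q l))"

text \<open>Relative entropy (natural log), finite case: only meaningful when q' l > 0 whenever q l > 0.\<close>
definition Dln :: "nat \<Rightarrow> (nat \<Rightarrow> real) \<Rightarrow> (nat \<Rightarrow> real) \<Rightarrow> real" where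
  "Dln L q q' = (\<Sum>l<L. if q l = 0 then 0 else q l * ln (q l / q' l))"

end

theory Submission
  imports Defs "HOL-Probability.Probability" "HOL-Combinatorics.Multiset_Permutations"
    "HOL-Real_Asymp.Real_Asymp"
begin

text \<open>
  In a homogeneous code all codewords have the same type, and every position
  carrying the symbol x l is decoded with the same set E l.  Hence every codeword
  is decoded correctly with the same probability, the product of p l ^ (n P_C l),
  which is exactly the exponential in (iii).
  As the decoding sets are disjoint, and nonempty once some p l is positive,
  distinct codewords are distinct words of the same type; so M is at most the
  multinomial coefficient, and Robbins' two-sided form of Stirling's formula
  turns this into the bound (i).  Finally (ii) is Markov's inequality for the
  empirical mean of g, whose expectation under every codeword is the
  P_C-average of the expectations of g (x l + W).
\<close>

section \<open>Robbins' bounds for ln n!\<close>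

lemma artanh_upper_bound:
  fixes x :: real assumes "0 \<le> x" "x < 1"
  shows "artanh x \<le> x + x^3 / (3 * (1 - x^2))"
proof -
  define f where "f y = y + y^3 / (3 * (1 - y^2)) - artanh y" for y :: real
  have "f 0 \<le> f x"
  proof (rule DERIV_nonneg_imp_nondecreasing[OF assms(1)])
    fix y :: real assume y: "0 \<le> y" "y \<le> x"
    then have y2: "y^2 < 1" "y < 1" using assms by (auto simp: abs_square_less_1)
    have "(f has_real_derivative 1 + (3 * y^2 * (3 * (1 - y^2)) + y^3 * (3 * (2 * y))) / (3 * (1 - y^2))^2 - 1 / (1 - y^2)) (at y)"
      unfolding f_def[abs_def] using y y2
      by (auto intro!: derivative_eq_intros simp: power2_eq_square power3_eq_cube)
    moreover have "1 + (3 * y^2 * (3 * (1 - y^2)) + y^3 * (3 * (2 * y))) / (3 * (1 - y^2))^2 - 1 / (1 - y^2)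
                 = 2 * y^4 / (3 * (1 - y^2)^2)"
      using y2 by (simp add: divide_simps) algebra
    ultimately show "\<exists>d. (f has_real_derivative d) (at y) \<and> 0 \<le> d" by force
  qed
  then show ?thesis by (simp add: f_def)
qed

lemma artanh_lower_bound:
  fixes x :: real assumes "0 \<le> x" "x < 1"
  shows "x + x^3 / (3 - x^2) \<le> artanh x"
proof -
  define f where "f y = artanh y - y - y^3 / (3 - y^2)" for y :: real
  have "f 0 \<le> f x"
  proof (rule DERIV_nonneg_imp_nondecreasing[OF assms(1)])
    fix y :: real assume y: "0 \<le> y" "y \<le> x"
    then have y2: "y^2 < 1" "y < 1" using assms by (auto simp: abs_square_less_1)
    have "(f has_real_derivative 1 / (1 - y^2) - 1 - (3 * y^2 * (3 - y^2) + y^3 * (2 * y)) / (3 - y^2)^2) (at y)"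
      unfolding f_def[abs_def] using y y2
      by (auto intro!: derivative_eq_intros simp: power2_eq_square power3_eq_cube)
    moreover have "1 / (1 - y^2) - 1 - (3 * y^2 * (3 - y^2) + y^3 * (2 * y)) / (3 - y^2)^2
                 = 4 * y^4 / ((1 - y^2) * (3 - y^2)^2)"
      using y2 by (simp add: divide_simps) algebra
    moreover have "0 \<le> 4 * y^4 / ((1 - y^2) * (3 - y^2)^2)"
      using y2 by simp
    ultimately show "\<exists>d. (f has_real_derivative d) (at y) \<and> 0 \<le> d" by force
  qed
  then show ?thesis by (simp add: f_def)
qed

text \<open>
  Robbins: with y = 1 / (2n + 1) one has (n + 1) / n = (1 + y) / (1 - y), so the
  decrement of the remainder below is (2n + 1) artanh y - 1, which the two cubic
  bounds for artanh pin between 1/(12n+1) - 1/(12n+13) and 1/(12n) - 1/(12n+12).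
\<close>

definition stirling_rem :: "nat \<Rightarrow> real" where
  "stirling_rem n = ln (fact n) - (real n + 1/2) * ln (real n) + real n"

lemma stirling_rem_diff:
  assumes "n \<ge> 1"
  shows "stirling_rem n - stirling_rem (Suc n) = (2 * real n + 1) * artanh (1 / (2 * real n + 1)) - 1"
proof -
  have "(1 + 1 / (2 * real n + 1)) / (1 - 1 / (2 * real n + 1)) = (real n + 1) / real n"
    using assms by (simp add: divide_simps)
  then have "ln (real n + 1) - ln (real n) = 2 * artanh (1 / (2 * real n + 1))"
    using assms by (simp add: artanh_def ln_div)
  moreover have "ln (fact (Suc n)) = ln (real n + 1) + ln (fact n :: real)"
    by (simp add: ln_mult_pos add.commute)
  ultimately show ?thesis
    unfolding stirling_rem_def of_nat_Suc by (simp add: algebra_simps)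
qed

lemma stirling_rem_diff_le:
  assumes "n \<ge> 1"
  shows "stirling_rem n - stirling_rem (Suc n) \<le> 1 / (12 * real n) - 1 / (12 * (real n + 1))"
proof -
  define s where "s = 2 * real n + 1"
  have s: "s > 1" "s^2 > 1" using assms by (auto simp: s_def one_less_power)
  have "stirling_rem n - stirling_rem (Suc n) \<le> s * (1/s + (1/s)^3 / (3 * (1 - (1/s)^2))) - 1"
    unfolding stirling_rem_diff[OF assms] s_def[symmetric]
    using s artanh_upper_bound[of "1/s"] by (simp add: mult_left_mono)
  also have "\<dots> = 1 / (3 * (s^2 - 1))"
    using s by (simp add: field_simps power2_eq_square power3_eq_cube)
  also have "\<dots> = 1 / (12 * real n) - 1 / (12 * (real n + 1))"
    using assms unfolding s_def by (simp add: field_simps power2_eq_square)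
  finally show ?thesis .
qed

lemma stirling_rem_diff_ge:
  assumes "n \<ge> 1"
  shows "1 / (12 * real n + 1) - 1 / (12 * (real n + 1) + 1) \<le> stirling_rem n - stirling_rem (Suc n)"
proof -
  define s where "s = 2 * real n + 1"
  have s: "s > 1" "s^2 > 1" using assms by (auto simp: s_def one_less_power)
  define X where "X = 3 * s^2 - 1"
  have "X > 0" using s unfolding X_def by linarith
  moreover have "12 * X \<le> (12 * real n + 1) * (12 * real n + 13)"
    using assms unfolding X_def s_def by (simp add: power2_eq_square algebra_simps)
  ultimately have "12 / ((12 * real n + 1) * (12 * real n + 13)) \<le> 12 / (12 * X)"
    by (intro divide_left_mono mult_pos_pos) auto
  then have "1 / (12 * real n + 1) - 1 / (12 * (real n + 1) + 1) \<le> 1 / X"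
    by (simp add: field_simps)
  also have "\<dots> = s * (1/s + (1/s)^3 / (3 - (1/s)^2)) - 1"
    using s unfolding X_def by (simp add: field_simps power2_eq_square power3_eq_cube)
  also have "\<dots> \<le> stirling_rem n - stirling_rem (Suc n)"
    unfolding stirling_rem_diff[OF assms] s_def[symmetric]
    using s artanh_lower_bound[of "1/s"] by (simp add: mult_left_mono)
  finally show ?thesis .
qed

lemma stirling_rem_limit_bounds:
  obtains C where "stirling_rem \<longlonglongrightarrow> C"
    and "\<And>n. n \<ge> 1 \<Longrightarrow> stirling_rem n - 1 / (12 * real n) \<le> C"
    and "\<And>n. n \<ge> 1 \<Longrightarrow> C \<le> stirling_rem n - 1 / (12 * real n + 1)"
proof -
  define f where "f k = stirling_rem (Suc k) - 1 / (12 * real (Suc k))" for k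
  define g where "g k = stirling_rem (Suc k) - 1 / (12 * real (Suc k) + 1)" for k
  have "f k \<le> f (Suc k)" for k
    using stirling_rem_diff_le[of "Suc k"] by (simp add: f_def algebra_simps)
  moreover have "g (Suc k) \<le> g k" for k
    using stirling_rem_diff_ge[of "Suc k"] by (simp add: g_def algebra_simps)
  moreover have "\<forall>k. f k \<le> g k"
    by (simp add: f_def g_def frac_le)
  moreover have "(\<lambda>k. f k - g k) = (\<lambda>k. 1 / (12 * real (Suc k) + 1) - 1 / (12 * real (Suc k)))"
    by (simp add: f_def g_def fun_eq_iff)
  then have "(\<lambda>k. f k - g k) \<longlonglongrightarrow> 0"
    by simp real_asymp
  ultimately obtain C where fC: "\<forall>k. f k \<le> C" "f \<longlonglongrightarrow> C" and gC: "\<forall>k. C \<le> g k"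
    using nested_sequence_unique by blast
  have "(\<lambda>k. f k + 1 / (12 * real (Suc k))) \<longlonglongrightarrow> C + 0"
    by (intro tendsto_add fC(2)) real_asymp
  then have "(\<lambda>k. stirling_rem (Suc k)) \<longlonglongrightarrow> C"
    by (simp add: f_def)
  then have "stirling_rem \<longlonglongrightarrow> C"
    by (rule LIMSEQ_imp_Suc)
  moreover have "stirling_rem n - 1 / (12 * real n) \<le> C" "C \<le> stirling_rem n - 1 / (12 * real n + 1)"
    if n: "n \<ge> 1" for n
  proof -
    obtain k where k: "n = Suc k" using n by (cases n) simp_all
    show "stirling_rem n - 1 / (12 * real n) \<le> C" "C \<le> stirling_rem n - 1 / (12 * real n + 1)"
      using fC(1) gC unfolding k f_def g_def by simp_all
  qed
  ultimately show thesis by (rule that)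
qed

lemma wallis_prod_eq:
  "(\<Prod>k=1..n. 4 * real k^2 / (4 * real k^2 - 1)) = (2^n * fact n)^4 / ((fact (2*n))^2 * (2 * real n + 1))"
proof (induction n)
  case (Suc n)
  define a :: real where "a = 2^n * fact n"
  define b :: real where "b = fact (2 * n)"
  have "b > 0" by (simp add: b_def)
  then have nz: "(2 * real n + 1) * (2 * real n + 3) * (b^2 * (2 * real n + 1)) \<noteq> 0"
    "((2 * real n + 2) * (2 * real n + 1) * b)^2 * (2 * real n + 3) \<noteq> 0"
    by (simp_all add: add_nonneg_eq_0_iff)
  have "(\<Prod>k=1..Suc n. 4 * real k^2 / (4 * real k^2 - 1))
      = 4 * (real n + 1)^2 / ((2 * real n + 1) * (2 * real n + 3)) * (a^4 / (b^2 * (2 * real n + 1)))"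
    unfolding a_def b_def Suc.IH[symmetric]
    by (subst prod.nat_ivl_Suc') (simp_all add: power2_eq_square algebra_simps)
  also have "\<dots> = (2 * (real n + 1) * a)^4 / (((2 * real n + 2) * (2 * real n + 1) * b)^2 * (2 * real n + 3))"
    unfolding times_divide_times_eq by (subst frac_eq_eq[OF nz]) (simp add: power2_eq_square power4_eq_xxxx algebra_simps)
  also have "(2 * (real n + 1) * a) = 2^Suc n * fact (Suc n)"
    by (simp add: a_def algebra_simps)
  also have "(2 * real n + 2) * (2 * real n + 1) * b = fact (2 * Suc n)"
    by (simp add: b_def algebra_simps)
  finally show ?case by (simp add: algebra_simps)
qed simp

lemma stirling_rem_tendsto: "stirling_rem \<longlonglongrightarrow> ln (sqrt (2 * pi))"
proof -
  obtain C where C: "stirling_rem \<longlonglongrightarrow> C" by (rule stirling_rem_limit_bounds)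
  define W where "W n = (\<Prod>k=1..n. 4 * real k^2 / (4 * real k^2 - 1))" for n
  have "strict_mono (\<lambda>n::nat. 2 * n)" by (rule strict_monoI) simp
  then have "(\<lambda>n. stirling_rem (2 * n)) \<longlonglongrightarrow> C"
    using LIMSEQ_subseq_LIMSEQ[OF C] by (simp add: comp_def)
  then have lim_rem: "(\<lambda>n. 4 * stirling_rem n - 2 * stirling_rem (2 * n)) \<longlonglongrightarrow> 4 * C - 2 * C"
    by (intro tendsto_intros C)
  have lim_W: "(\<lambda>n. ln (W n) + ln 2 + ln (2 + 1 / real n)) \<longlonglongrightarrow> ln (pi / 2) + ln 2 + ln 2"
  proof -
    have "(\<lambda>n. 2 + 1 / real n) \<longlonglongrightarrow> 2" by real_asymp
    then show ?thesis
      using wallis unfolding W_def by (intro tendsto_intros) auto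
  qed
  have "4 * stirling_rem n - 2 * stirling_rem (2 * n) = ln (W n) + ln 2 + ln (2 + 1 / real n)"
    if "n \<ge> 1" for n
  proof -
    have "ln (W n) = 4 * (real n * ln 2 + ln (fact n)) - 2 * ln (fact (2 * n)) - ln (2 * real n + 1)"
      unfolding W_def wallis_prod_eq by (simp add: ln_div ln_mult_pos ln_realpow)
    moreover have "2 + 1 / real n = (2 * real n + 1) / real n"
      using that by (simp add: field_simps)
    then have "ln (2 + 1 / real n) = ln (2 * real n + 1) - ln (real n)"
      using that by (simp add: ln_div)
    ultimately show ?thesis
      using that unfolding stirling_rem_def by (simp add: ln_mult algebra_simps)
  qed
  then have "(\<lambda>n. ln (W n) + ln 2 + ln (2 + 1 / real n)) \<longlonglongrightarrow> 4 * C - 2 * C"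
    by (intro Lim_transform_eventually[OF lim_rem] eventually_sequentiallyI)
  then have "2 * C = ln (pi / 2) + ln 2 + ln 2"
    using lim_W LIMSEQ_unique by fastforce
  then have "C = ln (sqrt (2 * pi))"
    by (simp add: ln_sqrt ln_div ln_mult)
  with C show ?thesis by simp
qed

lemma ln_fact_bounds:
  assumes "n \<ge> 1"
  shows "ln (fact n) \<le> (real n + 1/2) * ln (real n) - real n + ln (sqrt (2 * pi)) + 1 / (12 * real n)"
    and "(real n + 1/2) * ln (real n) - real n + ln (sqrt (2 * pi)) + 1 / (12 * real n + 1) \<le> ln (fact n)"
proof -
  obtain C where "stirling_rem \<longlonglongrightarrow> C"
    and "stirling_rem n - 1 / (12 * real n) \<le> C" "C \<le> stirling_rem n - 1 / (12 * real n + 1)"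
    using stirling_rem_limit_bounds assms by metis
  moreover have "C = ln (sqrt (2 * pi))"
    using LIMSEQ_unique stirling_rem_tendsto \<open>stirling_rem \<longlonglongrightarrow> C\<close> by blast
  ultimately show "ln (fact n) \<le> (real n + 1/2) * ln (real n) - real n + ln (sqrt (2 * pi)) + 1 / (12 * real n)"
    and "(real n + 1/2) * ln (real n) - real n + ln (sqrt (2 * pi)) + 1 / (12 * real n + 1) \<le> ln (fact n)"
    unfolding stirling_rem_def by simp_all
qed

section \<open>The multinomial rate bound\<close>

definition multinomial_rate_bound :: "nat \<Rightarrow> nat \<Rightarrow> (nat \<Rightarrow> real) \<Rightarrow> real" where
  "multinomial_rate_bound n L P = H2 L P
     + 1 / (real n)\<^sup>2 * (1/12 - (\<Sum>l<L. 1 / (12 * P l + 1)))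
     + 1 / real n * (log 2 (sqrt (2 * pi)) - (\<Sum>l<L. log 2 (sqrt (2 * pi * P l))))
     - log 2 (real n) / real n * ((real L - 1) / 2)"

lemma H2_of_type:
  fixes c :: "nat \<Rightarrow> nat"
  assumes n: "n \<ge> 1" and c_sum: "(\<Sum>l<L. c l) = n" and P: "\<And>l. l < L \<Longrightarrow> P l = real (c l) / real n"
  shows "real n * ln 2 * H2 L P = real n * ln (real n) - (\<Sum>l<L. real (c l) * ln (real (c l)))"
proof -
  have "real n * ln 2 * (if P l = 0 then 0 else P l * log 2 (P l))
      = real (c l) * ln (real (c l)) - real (c l) * ln (real n)" if "l < L" for l
    using n unfolding P[OF that] log_def by (cases "c l = 0") (simp_all add: ln_div field_simps)
  then have "real n * ln 2 * H2 L P = - (\<Sum>l<L. real (c l) * ln (real (c l)) - real (c l) * ln (real n))"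
    unfolding H2_def mult_minus_right sum_distrib_left by simp
  also have "\<dots> = real n * ln (real n) - (\<Sum>l<L. real (c l) * ln (real (c l)))"
    using c_sum by (simp add: sum_subtractf sum_distrib_right[symmetric] flip: of_nat_sum)
  finally show ?thesis .
qed

lemma multinomial_rate_bound_scaled:
  fixes c :: "nat \<Rightarrow> nat"
  assumes n: "n \<ge> 1" and c: "\<And>l. l < L \<Longrightarrow> c l \<ge> 1" and c_sum: "(\<Sum>l<L. c l) = n"
    and P: "\<And>l. l < L \<Longrightarrow> P l = real (c l) / real n"
  shows "real n * ln 2 * multinomial_rate_bound n L P
       = (real n + 1/2) * ln (real n) - (\<Sum>l<L. (real (c l) + 1/2) * ln (real (c l)))
         + (1 - real L) * ln (sqrt (2 * pi)) + ln 2 / (12 * real n) - (\<Sum>l<L. ln 2 / (12 * real (c l) + real n))"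
proof -
  define K where "K = ln (sqrt (2 * pi))"
  have cn: "real (c l) > 0" "real n > 0" if "l < L" for l using c[OF that] n by auto
  have entropy: "real n * ln 2 * H2 L P = real n * ln (real n) - (\<Sum>l<L. real (c l) * ln (real (c l)))"
    using H2_of_type[OF n c_sum P] by simp
  have "real n * ln 2 * (1 / (real n)\<^sup>2 * (1 / (12 * P l + 1))) = ln 2 / (12 * real (c l) + real n)"
    if "l < L" for l
  proof -
    have "12 * real (c l) + real n > 0" using cn[OF that] by simp
    then have "1 / (12 * P l + 1) = real n / (12 * real (c l) + real n)"
      unfolding P[OF that] using cn[OF that] by (simp add: field_simps)
    then show ?thesis
      using cn[OF that] by (simp add: power2_eq_square)
  qed
  then have second_order: "real n * ln 2 * (1 / (real n)\<^sup>2 * (1/12 - (\<Sum>l<L. 1 / (12 * P l + 1))))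
      = ln 2 / (12 * real n) - (\<Sum>l<L. ln 2 / (12 * real (c l) + real n))"
    using n by (simp add: right_diff_distrib sum_distrib_left power2_eq_square)
  have "real n * ln 2 * (1 / real n * log 2 (sqrt (2 * pi * P l))) = K + (ln (real (c l)) - ln (real n)) / 2"
    if "l < L" for l
    unfolding P[OF that] K_def log_def using cn[OF that]
    by (simp add: ln_sqrt ln_mult ln_div field_simps)
  then have first_order: "real n * ln 2 * (1 / real n * (log 2 (sqrt (2 * pi)) - (\<Sum>l<L. log 2 (sqrt (2 * pi * P l)))))
      = K - (\<Sum>l<L. K + (ln (real (c l)) - ln (real n)) / 2)"
    unfolding K_def log_def using n by (simp add: right_diff_distrib sum_distrib_left)
  have log_term: "real n * ln 2 * (log 2 (real n) / real n * ((real L - 1) / 2)) = ln (real n) * (real L - 1) / 2"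
    unfolding log_def using n by simp
  have split: "k * (a + b + d - e) = k * a + k * b + k * d - k * e" for k a b d e :: real
    by (simp add: algebra_simps)
  have "(\<Sum>l<L. K + (ln (real (c l)) - ln (real n)) / 2)
      = real L * K + (\<Sum>l<L. ln (real (c l))) / 2 - real L * ln (real n) / 2"
    by (simp add: sum.distrib sum_subtractf sum_divide_distrib[symmetric])
  moreover have "(\<Sum>l<L. (real (c l) + 1/2) * ln (real (c l)))
      = (\<Sum>l<L. real (c l) * ln (real (c l))) + (\<Sum>l<L. ln (real (c l))) / 2"
    by (simp add: distrib_right sum.distrib sum_divide_distrib[symmetric])
  ultimately show ?thesis
    unfolding multinomial_rate_bound_def split entropy second_order first_order log_term K_def[symmetric]
    by (simp add: sum_subtractf algebra_simps) (simp add: field_simps)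
qed

lemma ln_le_stirling_multinomial:
  fixes c :: "nat \<Rightarrow> nat" and M :: real
  assumes n: "n \<ge> 1" and c: "\<And>l. l < L \<Longrightarrow> c l \<ge> 1" and c_sum: "(\<Sum>l<L. c l) = n"
    and M: "M > 0" and M_le: "M * (\<Prod>l<L. fact (c l)) \<le> fact n"
  shows "ln M \<le> (real n + 1/2) * ln (real n) - (\<Sum>l<L. (real (c l) + 1/2) * ln (real (c l)))
           + (1 - real L) * ln (sqrt (2 * pi)) + 1 / (12 * real n) - (\<Sum>l<L. 1 / (12 * real (c l) + 1))"
proof -
  have "(\<Prod>l<L. fact (c l) :: real) > 0" by (intro prod_pos) auto
  then have "ln M + (\<Sum>l<L. ln (fact (c l))) = ln (M * (\<Prod>l<L. fact (c l)))"
    using M by (simp add: ln_mult_pos ln_prod)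
  also have "\<dots> \<le> ln (fact n)"
    using M M_le \<open>(\<Prod>l<L. fact (c l) :: real) > 0\<close> by simp
  finally have "ln M + (\<Sum>l<L. ln (fact (c l))) \<le> ln (fact n)" .
  moreover have "(\<Sum>l<L. (real (c l) + 1/2) * ln (real (c l)) - real (c l) + ln (sqrt (2 * pi))
                  + 1 / (12 * real (c l) + 1)) \<le> (\<Sum>l<L. ln (fact (c l)))"
    using ln_fact_bounds(2)[OF c] by (intro sum_mono) auto
  ultimately show ?thesis
    using ln_fact_bounds(1)[OF n] c_sum
    by (simp add: sum.distrib sum_subtractf algebra_simps flip: of_nat_sum)
qed

text \<open>
  The second-order term of the bound has denominators 12 c l + n where Stirling's
  formula gives 12 c l + 1; with at least two symbols the factor 1 - ln 2 absorbs
  the difference.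
\<close>

lemma robbins_remainder_le:
  fixes c :: "nat \<Rightarrow> nat"
  assumes L: "L \<ge> 2" and c: "\<And>l. l < L \<Longrightarrow> c l \<ge> 1" and c_sum: "(\<Sum>l<L. c l) = n"
  shows "1 / (12 * real n) - (\<Sum>l<L. 1 / (12 * real (c l) + 1))
       \<le> ln 2 / (12 * real n) - (\<Sum>l<L. ln 2 / (12 * real (c l) + real n))"
proof -
  have "c 0 + c 1 \<le> n"
    using L c_sum sum_mono2[of "{..<L}" "{0, 1}" c] by auto
  then have c0: "12 * real (c 0) + 1 \<le> 12 * real n" and n: "real n \<ge> 1"
    using c[of 1] L by linarith+
  have "(1 - ln 2) / (12 * real n) \<le> (1 - ln 2) / (12 * real (c 0) + 1)"
    using c0 ln_2_less_1 by (intro divide_left_mono) auto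
  also have "\<dots> \<le> (\<Sum>l<L. (1 - ln 2) / (12 * real (c l) + 1))"
    using L ln_2_less_1 by (intro member_le_sum) auto
  also have "\<dots> \<le> (\<Sum>l<L. 1 / (12 * real (c l) + 1) - ln 2 / (12 * real (c l) + real n))"
  proof (intro sum_mono)
    fix l
    have "ln 2 / (12 * real (c l) + real n) \<le> ln 2 / (12 * real (c l) + 1)"
      using n by (intro divide_left_mono) auto
    then show "(1 - ln 2) / (12 * real (c l) + 1) \<le> 1 / (12 * real (c l) + 1) - ln 2 / (12 * real (c l) + real n)"
      by (simp add: diff_divide_distrib)
  qed
  finally show ?thesis
    by (simp add: sum_subtractf diff_divide_distrib)
qed

lemma log_le_multinomial_rate_bound:
  fixes c :: "nat \<Rightarrow> nat" and M :: real
  assumes n: "n \<ge> 1" and L: "L \<ge> 1" and c: "\<And>l. l < L \<Longrightarrow> c l \<ge> 1" and c_sum: "(\<Sum>l<L. c l) = n"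
    and M: "M \<ge> 1" and M_le: "M * (\<Prod>l<L. fact (c l)) \<le> fact n"
    and P: "\<And>l. l < L \<Longrightarrow> P l = real (c l) / real n"
  shows "log 2 M / real n \<le> multinomial_rate_bound n L P"
proof -
  have scaled: "real n * ln 2 * multinomial_rate_bound n L P
       = (real n + 1/2) * ln (real n) - (\<Sum>l<L. (real (c l) + 1/2) * ln (real (c l)))
         + (1 - real L) * ln (sqrt (2 * pi)) + ln 2 / (12 * real n) - (\<Sum>l<L. ln 2 / (12 * real (c l) + real n))"
    using multinomial_rate_bound_scaled[OF n c c_sum P] by simp
  have "ln M \<le> real n * ln 2 * multinomial_rate_bound n L P"
  proof (cases "L = 1")
    case True
    then have "c 0 = n" using c_sum by simp
    then have "M \<le> 1" using M_le True by simp
    then have "ln M \<le> 0" using M by simp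
    also have "0 \<le> ln 2 / (12 * real n) - ln 2 / (12 * real n + real n)"
      using n by (simp add: frac_le)
    finally show ?thesis
      unfolding scaled using True \<open>c 0 = n\<close> by simp
  next
    case False
    have "ln M \<le> (real n + 1/2) * ln (real n) - (\<Sum>l<L. (real (c l) + 1/2) * ln (real (c l)))
           + (1 - real L) * ln (sqrt (2 * pi)) + 1 / (12 * real n) - (\<Sum>l<L. 1 / (12 * real (c l) + 1))"
      using ln_le_stirling_multinomial[OF n c c_sum _ M_le] M by simp
    with False L show ?thesis
      unfolding scaled using robbins_remainder_le[OF _ c c_sum] by simp
  qed
  then show ?thesis
    using n M by (simp add: log_def field_simps)
qed

section \<open>Words of a given type\<close>

lemma prod_by_symbol_count:
  fixes x u :: "nat \<Rightarrow> 'b" and \<phi> :: "'b \<Rightarrow> 'a::comm_monoid_mult"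
  assumes x: "inj_on x {..<L}" and u: "\<And>t. t < n \<Longrightarrow> u t \<in> x ` {..<L}"
  shows "(\<Prod>t<n. \<phi> (u t)) = (\<Prod>l<L. \<phi> (x l) ^ card {t. t < n \<and> u t = x l})"
proof -
  have "(\<Prod>t<n. \<phi> (u t)) = (\<Prod>a\<in>x ` {..<L}. \<Prod>t\<in>{t. t \<in> {..<n} \<and> u t = a}. \<phi> (u t))"
    using u by (intro prod.group[symmetric]) auto
  also have "\<dots> = (\<Prod>l<L. \<Prod>t\<in>{t. t < n \<and> u t = x l}. \<phi> (x l))"
    using x by (simp add: prod.reindex)
  finally show ?thesis by simp
qed

lemma sum_by_symbol_count:
  fixes x u :: "nat \<Rightarrow> 'b" and \<phi> :: "'b \<Rightarrow> 'a::comm_semiring_1"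
  assumes x: "inj_on x {..<L}" and u: "\<And>t. t < n \<Longrightarrow> u t \<in> x ` {..<L}"
  shows "(\<Sum>t<n. \<phi> (u t)) = (\<Sum>l<L. of_nat (card {t. t < n \<and> u t = x l}) * \<phi> (x l))"
proof -
  have "(\<Sum>t<n. \<phi> (u t)) = (\<Sum>a\<in>x ` {..<L}. \<Sum>t\<in>{t. t \<in> {..<n} \<and> u t = a}. \<phi> (u t))"
    using u by (intro sum.group[symmetric]) auto
  also have "\<dots> = (\<Sum>l<L. \<Sum>t\<in>{t. t < n \<and> u t = x l}. \<phi> (x l))"
    using x by (simp add: sum.reindex)
  finally show ?thesis by simp
qed

lemma count_mset_map_upt: "count (mset (map f [0..<n])) a = card {t. t < n \<and> f t = a}"
proof -
  have "count (mset (map f [0..<n])) a = length (filter ((=) a) (map f [0..<n]))"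
    by (simp only: count_mset count_list_eq_length_filter)
  also have "\<dots> = card {t. t < n \<and> a = map f [0..<n] ! t}"
    by (simp add: length_filter_conv_card)
  also have "{t. t < n \<and> a = map f [0..<n] ! t} = {t. t < n \<and> f t = a}"
    by auto
  finally show ?thesis .
qed

lemma mset_map_upt_eq_if_counts_eq:
  assumes "\<And>t. t < n \<Longrightarrow> v t \<in> X" and "\<And>t. t < n \<Longrightarrow> w t \<in> X"
    and "\<And>a. a \<in> X \<Longrightarrow> card {t. t < n \<and> v t = a} = card {t. t < n \<and> w t = a}"
  shows "mset (map v [0..<n]) = mset (map w [0..<n])"
proof (rule multiset_eqI)
  fix a
  show "count (mset (map v [0..<n])) a = count (mset (map w [0..<n])) a"
  proof (cases "a \<in> X")
    case False
    then have empty: "{t. t < n \<and> v t = a} = {}" "{t. t < n \<and> w t = a} = {}"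
      using assms(1,2) by blast+
    show ?thesis unfolding count_mset_map_upt empty ..
  qed (use assms(3) in \<open>simp only: count_mset_map_upt\<close>)
qed

lemma distinct_words_of_type_le_multinomial:
  fixes x :: "nat \<Rightarrow> 'a" and w :: "nat \<Rightarrow> nat \<Rightarrow> 'a" and c :: "nat \<Rightarrow> nat"
  assumes x: "inj_on x {..<L}"
    and symbols: "\<And>i t. i < M \<Longrightarrow> t < n \<Longrightarrow> w i t \<in> x ` {..<L}"
    and type: "\<And>i l. i < M \<Longrightarrow> l < L \<Longrightarrow> card {t. t < n \<and> w i t = x l} = c l"
    and distinct: "\<And>i j. i < M \<Longrightarrow> j < M \<Longrightarrow> i \<noteq> j \<Longrightarrow> \<exists>t<n. w i t \<noteq> w j t"
  shows "M * (\<Prod>l<L. fact (c l)) \<le> fact n"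
proof (cases "M = 0")
  case False
  define word where "word i = map (w i) [0..<n]" for i
  define T where "T = mset (word 0)"
  have count_T: "count T (x l) = c l" if "l < L" for l
    using type[OF _ that] False unfolding T_def word_def count_mset_map_upt by simp
  have "mset (word i) = T" if "i < M" for i
    unfolding T_def word_def using symbols type that False
    by (intro mset_map_upt_eq_if_counts_eq[where X = "x ` {..<L}"]) auto
  then have "word ` {..<M} \<subseteq> permutations_of_multiset T"
    by (auto intro: permutations_of_multisetI)
  moreover have "inj_on word {..<M}"
  proof (rule inj_onI)
    fix i j assume "i \<in> {..<M}" "j \<in> {..<M}" "word i = word j"
    then show "i = j"
      using distinct[of i j] by (auto simp: word_def map_eq_conv atLeast0LessThan)
  qed
  ultimately have "M \<le> card (permutations_of_multiset T)"
    by (metis card_image card_lessThan card_mono finite_permutations_of_multiset)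
  moreover have "(\<Prod>a\<in>set_mset T. fact (count T a)) = (\<Prod>l<L. fact (c l))"
  proof -
    have "set_mset T \<subseteq> x ` {..<L}"
      using symbols False by (auto simp: T_def word_def)
    then have "(\<Prod>a\<in>set_mset T. fact (count T a)) = (\<Prod>a\<in>x ` {..<L}. fact (count T a))"
      by (intro prod.mono_neutral_left) (auto simp: not_in_iff)
    also have "\<dots> = (\<Prod>l<L. fact (c l))"
      using x count_T by (simp add: prod.reindex)
    finally show ?thesis .
  qed
  moreover have "size T = n" by (simp add: T_def word_def)
  ultimately show ?thesis
    using mult_le_mono1 card_permutations_of_multiset_aux[of T] by metis
qed simp

lemma exp_entropy_divergence_eq_prod:
  fixes c :: "nat \<Rightarrow> nat" and p P :: "nat \<Rightarrow> real"
  assumes n: "n \<ge> 1" and c_sum: "(\<Sum>l<L. c l) = n" and P: "\<And>l. l < L \<Longrightarrow> P l = real (c l) / real n"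
    and S: "S > 0" and p: "\<And>l. l < L \<Longrightarrow> P l > 0 \<Longrightarrow> p l > 0"
  shows "exp (- real n * Hln L P - real n * Dln L P (\<lambda>l. p l / S) + real n * ln S) = (\<Prod>l<L. p l ^ c l)"
proof -
  define e where "e l = real n * (if P l = 0 then 0 else P l * ln (P l))
      - real n * (if P l = 0 then 0 else P l * ln (P l / (p l / S))) + real n * P l * ln S" for l
  have "(\<Sum>l<L. P l) = 1"
    using n c_sum P by (simp add: sum_divide_distrib[symmetric] flip: of_nat_sum)
  then have "(\<Sum>l<L. real n * P l * ln S) = real n * ln S"
    by (simp flip: sum_distrib_left sum_distrib_right)
  then have "- real n * Hln L P - real n * Dln L P (\<lambda>l. p l / S) + real n * ln S = (\<Sum>l<L. e l)"
    unfolding Hln_def Dln_def e_def by (simp add: sum.distrib sum_subtractf sum_distrib_left sum_negf)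
  moreover have "exp (e l) = p l ^ c l" if "l < L" for l
  proof (cases "c l = 0")
    case True
    then show ?thesis using P[OF that] by (simp add: e_def)
  next
    case False
    then have "P l > 0" "p l > 0" using P[OF that] p[OF that] n by auto
    then have "e l = real n * P l * ln (p l)"
      using S by (simp add: e_def ln_div ln_mult algebra_simps)
    also have "\<dots> = real (c l) * ln (p l)"
      using P[OF that] n by simp
    finally show ?thesis
      using \<open>p l > 0\<close> by (simp add: exp_of_nat_mult)
  qed
  ultimately show ?thesis
    by (simp add: exp_sum)
qed

section \<open>The channel measures\<close>

lemma fYX_nonneg: "s2 \<ge> 0 \<Longrightarrow> fYX s2 y x \<ge> 0"
  unfolding fYX_def by simp

lemma borel_measurable_fYX [measurable]: "(\<lambda>y. fYX s2 y x) \<in> borel_measurable borel"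
  unfolding fYX_def by measurable

lemma fYX_eq_normal_density:
  assumes "s2 > 0"
  shows "fYX s2 y x = normal_density (Re x) (sqrt (s2/2)) (Re y) * normal_density (Im x) (sqrt (s2/2)) (Im y)"
proof -
  have "sqrt (2 * pi * (sqrt (s2/2))\<^sup>2) = sqrt (pi * s2)" "2 * (sqrt (s2/2))\<^sup>2 = s2"
    using assms by simp_all
  moreover have "sqrt (pi * s2) * sqrt (pi * s2) = pi * s2" using assms by simp
  ultimately show ?thesis
    unfolding fYX_def normal_density_def using assms
    by (simp add: cmod_power2 exp_add[symmetric] add_divide_distrib diff_divide_distrib)
qed

lemma nn_integral_fYX:
  assumes "s2 > 0"
  shows "(\<integral>\<^sup>+ y. ennreal (fYX s2 y x) \<partial>lborel) = 1"
proof -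
  define f :: "complex \<Rightarrow> real \<Rightarrow> real" where
    "f b = (if b = 1 then normal_density (Re x) (sqrt (s2/2)) else normal_density (Im x) (sqrt (s2/2)))" for b
  have "(\<integral>\<^sup>+ y. ennreal (fYX s2 y x) \<partial>lborel) = (\<integral>\<^sup>+ y. (\<Prod>b\<in>Basis. ennreal (f b (y \<bullet> b))) \<partial>lborel)"
    unfolding f_def Basis_complex_def using assms
    by (simp add: fYX_eq_normal_density mult.commute ennreal_mult')
  also have "\<dots> = (\<Prod>b\<in>Basis. (\<integral>\<^sup>+ t. f b t \<partial>lborel))"
    by (rule nn_integral_lborel_prod) (auto simp: f_def)
  also have "\<dots> = 1"
    unfolding Basis_complex_def f_def using assms by (simp add: nn_integral_eq_integral)
  finally show ?thesis .
qed

lemma space_chan1 [simp]: "space (chan1 s2 x) = UNIV"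
  by (simp add: chan1_def)

lemma sets_chan1 [simp, measurable_cong]: "sets (chan1 s2 x) = sets lborel"
  by (simp add: chan1_def)

lemma emeasure_chan1:
  "A \<in> sets lborel \<Longrightarrow> emeasure (chan1 s2 x) A = (\<integral>\<^sup>+ y. ennreal (fYX s2 y x) * indicator A y \<partial>lborel)"
  unfolding chan1_def by (rule emeasure_density) auto

lemma prob_space_chan1: "s2 > 0 \<Longrightarrow> prob_space (chan1 s2 x)"
  by (rule prob_spaceI) (simp add: emeasure_chan1 nn_integral_fYX)

lemma space_chanN: "space (chanN s2 n v) = PiE {..<n} (\<lambda>_. UNIV)"
  unfolding chanN_def by (simp add: space_PiM)

lemma sets_chanN [simp, measurable_cong]: "sets (chanN s2 n v) = sets (PiM {..<n} (\<lambda>_. lborel))"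
  unfolding chanN_def by simp

lemma nn_integral_chanN_prod:
  assumes "s2 > 0" and h [measurable]: "\<And>t. t < n \<Longrightarrow> h t \<in> borel_measurable borel"
  shows "(\<integral>\<^sup>+ z. (\<Prod>t<n. h t (z t)) \<partial>chanN s2 n v) = (\<Prod>t<n. \<integral>\<^sup>+ y. h t y \<partial>chan1 s2 (v t))"
proof -
  interpret product_sigma_finite "\<lambda>_. lborel :: complex measure" by standard
  have "(\<integral>\<^sup>+ z. (\<Prod>t<n. h t (z t)) \<partial>chanN s2 n v)
      = (\<integral>\<^sup>+ z. ennreal (\<Prod>t<n. fYX s2 (z t) (v t)) * (\<Prod>t<n. h t (z t)) \<partial>PiM {..<n} (\<lambda>_. lborel))"
    unfolding chanN_def by (rule nn_integral_density) measurable
  also have "\<dots> = (\<integral>\<^sup>+ z. (\<Prod>t<n. ennreal (fYX s2 (z t) (v t)) * h t (z t)) \<partial>PiM {..<n} (\<lambda>_. lborel))"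
    using assms(1) by (simp add: prod.distrib prod_ennreal fYX_nonneg)
  also have "\<dots> = (\<Prod>t<n. \<integral>\<^sup>+ y. ennreal (fYX s2 y (v t)) * h t y \<partial>lborel)"
    by (rule product_nn_integral_prod) auto
  also have "\<dots> = (\<Prod>t<n. \<integral>\<^sup>+ y. h t y \<partial>chan1 s2 (v t))"
    unfolding chan1_def by (intro prod.cong refl nn_integral_density[symmetric]) auto
  finally show ?thesis .
qed

lemma prob_space_chanN:
  assumes "s2 > 0" shows "prob_space (chanN s2 n v)"
proof (rule prob_spaceI)
  have "emeasure (chanN s2 n v) (space (chanN s2 n v)) = (\<integral>\<^sup>+ z. (\<Prod>t<n. 1) \<partial>chanN s2 n v)"
    by (simp add: nn_integral_const)
  also have "\<dots> = (\<Prod>t<n. \<integral>\<^sup>+ y. 1 \<partial>chan1 s2 (v t))"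
    using assms by (intro nn_integral_chanN_prod) auto
  also have "\<dots> = 1"
    using prob_space.emeasure_space_1[OF prob_space_chan1[OF assms]] by simp
  finally show "emeasure (chanN s2 n v) (space (chanN s2 n v)) = 1" .
qed

lemma emeasure_chanN_PiE:
  assumes "s2 > 0" and A: "\<And>t. t < n \<Longrightarrow> A t \<in> sets lborel"
  shows "emeasure (chanN s2 n v) (PiE {..<n} A) = (\<Prod>t<n. emeasure (chan1 s2 (v t)) (A t))"
proof -
  have "PiE {..<n} A \<in> sets (chanN s2 n v)"
    using A by (auto intro: sets_PiM_I_finite)
  then have "emeasure (chanN s2 n v) (PiE {..<n} A) = (\<integral>\<^sup>+ z. (\<Prod>t<n. indicator (A t) (z t)) \<partial>chanN s2 n v)"
    by (auto simp: space_chanN indicator_def PiE_def Pi_def prod_zero_iff intro!: nn_integral_cong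
             simp flip: nn_integral_indicator)
  also have "\<dots> = (\<Prod>t<n. \<integral>\<^sup>+ y. indicator (A t) y \<partial>chan1 s2 (v t))"
    using assms by (intro nn_integral_chanN_prod) auto
  also have "\<dots> = (\<Prod>t<n. emeasure (chan1 s2 (v t)) (A t))"
    using A by (intro prod.cong refl nn_integral_indicator) auto
  finally show ?thesis .
qed

lemma nn_integral_chanN_component:
  assumes "s2 > 0" and "t < n" and [measurable]: "h \<in> borel_measurable borel"
  shows "(\<integral>\<^sup>+ z. h (z t) \<partial>chanN s2 n v) = (\<integral>\<^sup>+ y. h y \<partial>chan1 s2 (v t))"
proof -
  have "(\<integral>\<^sup>+ z. h (z t) \<partial>chanN s2 n v) = (\<integral>\<^sup>+ z. (\<Prod>s<n. if s = t then h (z s) else 1) \<partial>chanN s2 n v)"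
    using assms(2) by (simp add: prod.delta)
  also have "\<dots> = (\<Prod>s<n. \<integral>\<^sup>+ y. (if s = t then h y else 1) \<partial>chan1 s2 (v s))"
    using assms(1) by (intro nn_integral_chanN_prod) auto
  also have "\<dots> = (\<Prod>s<n. if s = t then \<integral>\<^sup>+ y. h y \<partial>chan1 s2 (v t) else 1)"
    using prob_space.emeasure_space_1[OF prob_space_chan1[OF assms(1)]]
    by (intro prod.cong refl) (simp add: nn_integral_const)
  also have "\<dots> = (\<integral>\<^sup>+ y. h y \<partial>chan1 s2 (v t))"
    using assms(2) by (simp add: prod.delta)
  finally show ?thesis .
qed

lemma nn_integral_noiseW_shift:
  assumes [measurable]: "h \<in> borel_measurable borel"
  shows "(\<integral>\<^sup>+ w. h (x + w) \<partial>noiseW s2) = (\<integral>\<^sup>+ y. h y \<partial>chan1 s2 x)"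
proof -
  have "(\<integral>\<^sup>+ w. h (x + w) \<partial>noiseW s2) = (\<integral>\<^sup>+ w. ennreal (fYX s2 (x + w) x) * h (x + w) \<partial>lborel)"
    unfolding noiseW_def chan1_def by (subst nn_integral_density) (auto simp: fYX_def)
  also have "\<dots> = (\<integral>\<^sup>+ y. ennreal (fYX s2 y x) * h y \<partial>distr lborel borel ((+) x))"
    by (subst nn_integral_distr) auto
  also have "\<dots> = (\<integral>\<^sup>+ y. h y \<partial>chan1 s2 x)"
    unfolding lborel_distr_plus chan1_def by (subst nn_integral_density) auto
  finally show ?thesis .
qed

lemma (in prob_space) markov_threshold:
  assumes [measurable]: "G \<in> borel_measurable M" and B: "B > 0"
  shows "ennreal (B * (1 - prob {z \<in> space M. enn2ereal (G z) < ereal B})) \<le> (\<integral>\<^sup>+ z. G z \<partial>M)"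
proof -
  let ?below = "{z \<in> space M. enn2ereal (G z) < ereal B}"
  have "enn2ereal (G z) < ereal B \<longleftrightarrow> \<not> ennreal B \<le> G z" for z
    using B by (metis enn2ereal_ennreal less_eq_ennreal.rep_eq less_le_not_le linorder_not_less order.strict_implies_order)
  then have "space M - ?below = {z \<in> space M. ennreal B \<le> G z}" by auto
  moreover have "?below \<in> sets M" by measurable
  ultimately have "ennreal (B * (1 - prob ?below)) = ennreal B * emeasure M {z \<in> space M. ennreal B \<le> G z}"
    using B by (simp add: emeasure_eq_measure prob_compl ennreal_mult flip: \<open>space M - ?below = _\<close>)
  also have "\<dots> = (\<integral>\<^sup>+ z. ennreal B * indicator {z \<in> space M. ennreal B \<le> G z} z \<partial>M)"
    by (rule nn_integral_cmult_indicator[symmetric]) measurable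
  also have "\<dots> \<le> (\<integral>\<^sup>+ z. G z \<partial>M)"
    by (rule nn_integral_mono) (auto split: split_indicator)
  finally show ?thesis .
qed

section \<open>Homogeneous codes\<close>

locale homogeneous_code =
  fixes s2 :: real and n M L :: nat and x :: "nat \<Rightarrow> complex" and A :: real
    and u :: "nat \<Rightarrow> nat \<Rightarrow> complex" and D :: "nat \<Rightarrow> nat \<Rightarrow> complex set"
  assumes n_pos: "n \<ge> 1" and M_pos: "M \<ge> 1" and x_inj: "inj_on x {..<L}" and s2_pos: "s2 > 0"
    and code: "is_code n M L x A u D" and homogeneous: "homogeneous s2 n M L x u D"
begin

definition symbol_count :: "nat \<Rightarrow> nat" where
  "symbol_count l = card {t. t < n \<and> u 0 t = x l}"

definition p :: "nat \<Rightarrow> real" where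
  "p l = measure (chan1 s2 (x l)) (Eset s2 n M x D l)"

lemma codeword_symbols: "i < M \<Longrightarrow> t < n \<Longrightarrow> u i t \<in> x ` {..<L}"
  using code by (auto simp: is_code_def)

lemma decoding_sets_measurable: "i < M \<Longrightarrow> t < n \<Longrightarrow> D i t \<in> sets lborel"
  using code by (auto simp: is_code_def)

lemma decoding_sets_disjoint: "i < M \<Longrightarrow> j < M \<Longrightarrow> i \<noteq> j \<Longrightarrow> PiE {..<n} (D i) \<inter> PiE {..<n} (D j) = {}"
  using code by (auto simp: is_code_def)

lemma decoding_set_eq_Eset: "i < M \<Longrightarrow> t < n \<Longrightarrow> l < L \<Longrightarrow> u i t = x l \<Longrightarrow> D i t = Eset s2 n M x D l"
  using homogeneous by (auto simp: homogeneous_def)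

lemma card_symbol_eq:
  assumes "i < M" "l < L"
  shows "card {t. t < n \<and> u i t = x l} = symbol_count l"
proof -
  have "wtype n (u i) (x l) = wtype n (u 0) (x l)"
    using homogeneous assms M_pos by (simp add: homogeneous_def)
  then show ?thesis
    using n_pos by (simp add: wtype_def symbol_count_def)
qed

lemma ctype_eq: "l < L \<Longrightarrow> ctype n M u (x l) = real (symbol_count l) / real n"
  using homogeneous M_pos by (auto simp: homogeneous_def wtype_def symbol_count_def)

lemma sum_symbol_count: "(\<Sum>l<L. symbol_count l) = n"
  using sum_by_symbol_count[OF x_inj, of n "u 0" "\<lambda>_. 1::nat"] codeword_symbols M_pos
  by (simp add: symbol_count_def)

lemma p_le_decoding_set:
  assumes "i < M" "t < n"
  shows "p l \<le> measure (chan1 s2 (x l)) (D i t)"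
proof -
  let ?m = "\<lambda>(i, t). measure (chan1 s2 (x l)) (D i t)"
  let ?S = "{..<M} \<times> {..<n}"
  have "(0, 0) \<in> ?S" using M_pos n_pos by simp
  then have S: "finite ?S" "?S \<noteq> {}" by auto
  obtain i0 t0 where it0: "arg_min_on ?m ?S = (i0, t0)" by (metis surj_pair)
  then have "i0 < M \<and> t0 < n \<and> (\<forall>i'<M. \<forall>t'<n. ?m (i0, t0) \<le> ?m (i', t'))"
    using arg_min_if_finite(1)[OF S, of ?m] arg_min_least[OF S, of _ ?m] by auto
  then have "\<exists>E. \<exists>i<M. \<exists>t<n. E = D i t \<and>
      (\<forall>i'<M. \<forall>t'<n. measure (chan1 s2 (x l)) (D i t) \<le> measure (chan1 s2 (x l)) (D i' t'))"
    by auto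
  then have "\<exists>i<M. \<exists>t<n. Eset s2 n M x D l = D i t \<and>
      (\<forall>i'<M. \<forall>t'<n. measure (chan1 s2 (x l)) (D i t) \<le> measure (chan1 s2 (x l)) (D i' t'))"
    unfolding Eset_def by (rule someI_ex)
  then show ?thesis
    using assms unfolding p_def by auto
qed

lemma success_probability:
  assumes i: "i < M"
  shows "measure (chanN s2 n (u i)) (PiE {..<n} (D i)) = (\<Prod>l<L. p l ^ symbol_count l)"
proof -
  define sym where "sym a = p (the_inv_into {..<L} x a)" for a
  have sym_x: "sym (x l) = p l" if "l < L" for l
    using x_inj that by (simp add: sym_def the_inv_into_f_f)
  have "emeasure (chanN s2 n (u i)) (PiE {..<n} (D i)) = (\<Prod>t<n. emeasure (chan1 s2 (u i t)) (D i t))"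
    using s2_pos decoding_sets_measurable[OF i] by (rule emeasure_chanN_PiE)
  also have "\<dots> = (\<Prod>t<n. ennreal (sym (u i t)))"
  proof (intro prod.cong refl)
    fix t assume "t \<in> {..<n}"
    then obtain l where l: "l < L" "u i t = x l" using codeword_symbols[OF i] by auto
    then show "emeasure (chan1 s2 (u i t)) (D i t) = ennreal (sym (u i t))"
      using decoding_set_eq_Eset[OF i _ l(1)] \<open>t \<in> {..<n}\<close> sym_x
      by (simp add: p_def finite_measure.emeasure_eq_measure[OF prob_space.finite_measure[OF prob_space_chan1[OF s2_pos]]])
  qed
  also have "\<dots> = ennreal (\<Prod>t<n. sym (u i t))"
    by (simp add: prod_ennreal sym_def p_def)
  also have "(\<Prod>t<n. sym (u i t)) = (\<Prod>l<L. sym (x l) ^ card {t. t < n \<and> u i t = x l})"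
    by (rule prod_by_symbol_count[OF x_inj]) (use codeword_symbols i in auto)
  also have "\<dots> = (\<Prod>l<L. p l ^ symbol_count l)"
    using card_symbol_eq[OF i] sym_x by simp
  finally show ?thesis
    by (simp add: measure_def p_def prod_nonneg)
qed

lemma err_eq: "err s2 n M u D = 1 - (\<Prod>l<L. p l ^ symbol_count l)"
  using M_pos by (simp add: err_def err_i_def success_probability)

lemma codewords_differ:
  assumes p_pos: "(\<Sum>l<L. p l) > 0" and ij: "i < M" "j < M" "i \<noteq> j"
  shows "\<exists>t<n. u i t \<noteq> u j t"
proof (rule ccontr)
  assume "\<not> (\<exists>t<n. u i t \<noteq> u j t)"
  then have "D i t = D j t" if "t < n" for t
  proof -
    obtain l where "l < L" "u i t = x l" using codeword_symbols[OF ij(1) \<open>t < n\<close>] by auto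
    then show ?thesis
      using decoding_set_eq_Eset[OF ij(1) \<open>t < n\<close>] decoding_set_eq_Eset[OF ij(2) \<open>t < n\<close>]
        \<open>\<not> (\<exists>t<n. u i t \<noteq> u j t)\<close> \<open>t < n\<close> by metis
  qed
  then have "PiE {..<n} (D i) = PiE {..<n} (D j)" by (intro PiE_cong) auto
  moreover obtain l where "p l > 0"
    using p_pos sum_nonpos[of "{..<L}" p] by (meson not_less)
  then have "D i t \<noteq> {}" if "t < n" for t
    using p_le_decoding_set[OF ij(1) that, of l] by auto
  then have "PiE {..<n} (D i) \<noteq> {}" by (simp add: PiE_eq_empty_iff)
  ultimately show False using decoding_sets_disjoint[OF ij] by simp
qed

lemma card_code_le_multinomial:
  assumes "(\<Sum>l<L. p l) > 0"
  shows "real M * (\<Prod>l<L. fact (symbol_count l)) \<le> fact n"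
proof -
  have "M * (\<Prod>l<L. fact (symbol_count l)) \<le> fact n"
    using x_inj codeword_symbols card_symbol_eq codewords_differ[OF assms]
    by (rule distinct_words_of_type_le_multinomial)
  then have "real (M * (\<Prod>l<L. fact (symbol_count l))) \<le> real (fact n)"
    by (simp only: of_nat_le_iff)
  then show ?thesis
    by (simp add: of_nat_prod)
qed

lemma nn_integral_empirical_mean:
  assumes [measurable]: "g \<in> borel_measurable borel" and i: "i < M"
  shows "(\<integral>\<^sup>+ z. (\<Sum>t<n. g (z t)) / of_nat n \<partial>chanN s2 n (u i))
       = (\<Sum>l<L. ennreal (ctype n M u (x l)) * (\<integral>\<^sup>+ y. g y \<partial>chan1 s2 (x l)))"
proof -
  define J where "J a = (\<integral>\<^sup>+ y. g y \<partial>chan1 s2 a)" for a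
  have inv_n: "inverse (of_nat n :: ennreal) = ennreal (1 / real n)"
    using n_pos by (simp add: ennreal_of_nat_eq_real_of_nat inverse_ennreal inverse_eq_divide)
  have "(\<integral>\<^sup>+ z. (\<Sum>t<n. g (z t)) / of_nat n \<partial>chanN s2 n (u i))
      = (\<integral>\<^sup>+ z. (\<Sum>t<n. g (z t)) \<partial>chanN s2 n (u i)) * ennreal (1 / real n)"
    unfolding divide_ennreal_def inv_n by (rule nn_integral_multc) measurable
  also have "(\<integral>\<^sup>+ z. (\<Sum>t<n. g (z t)) \<partial>chanN s2 n (u i)) = (\<Sum>t<n. J (u i t))"
    unfolding J_def using s2_pos by (simp add: nn_integral_sum nn_integral_chanN_component)
  also have "\<dots> = (\<Sum>l<L. of_nat (card {t. t < n \<and> u i t = x l}) * J (x l))"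
    by (rule sum_by_symbol_count[OF x_inj]) (use codeword_symbols i in auto)
  also have "\<dots> * ennreal (1 / real n) = (\<Sum>l<L. ennreal (ctype n M u (x l)) * J (x l))"
    unfolding sum_distrib_right
  proof (intro sum.cong refl)
    fix l assume "l \<in> {..<L}"
    then have "(of_nat (card {t. t < n \<and> u i t = x l}) :: ennreal) * ennreal (1 / real n) = ennreal (ctype n M u (x l))"
      using card_symbol_eq[OF i] ctype_eq
      by (simp add: ennreal_of_nat_eq_real_of_nat ennreal_mult''[symmetric])
    then show "of_nat (card {t. t < n \<and> u i t = x l}) * J (x l) * ennreal (1 / real n)
        = ennreal (ctype n M u (x l)) * J (x l)"
      by (simp add: ac_simps)
  qed
  finally show ?thesis unfolding J_def .
qed

lemma markov_codeword:
  assumes [measurable]: "g \<in> borel_measurable borel" and B: "B > 0" and i: "i < M"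
  shows "ennreal (B * (1 - theta_i s2 n g B u i))
       \<le> (\<Sum>l<L. ennreal (ctype n M u (x l)) * (\<integral>\<^sup>+ y. g y \<partial>chan1 s2 (x l)))"
proof -
  interpret prob_space "chanN s2 n (u i)" by (rule prob_space_chanN[OF s2_pos])
  have "(\<lambda>z. (\<Sum>t<n. g (z t)) / of_nat n) \<in> borel_measurable (chanN s2 n (u i))" by measurable
  from markov_threshold[OF this B] show ?thesis
    unfolding theta_i_def nn_integral_empirical_mean[OF assms(1) i] .
qed

lemma sum_ereal_noise_mean:
  assumes [measurable]: "g \<in> borel_measurable borel"
  shows "(\<Sum>l<L. ereal (ctype n M u (x l)) * enn2ereal (\<integral>\<^sup>+ w. g (x l + w) \<partial>noiseW s2))
       = enn2ereal (\<Sum>l<L. ennreal (ctype n M u (x l)) * (\<integral>\<^sup>+ y. g y \<partial>chan1 s2 (x l)))"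
proof -
  have "(\<Sum>l<L. ereal (ctype n M u (x l)) * enn2ereal (\<integral>\<^sup>+ w. g (x l + w) \<partial>noiseW s2))
      = (\<Sum>l<L. enn2ereal (ennreal (ctype n M u (x l)) * (\<integral>\<^sup>+ y. g y \<partial>chan1 s2 (x l))))"
    unfolding nn_integral_noiseW_shift[OF assms] by (intro sum.cong refl) (simp add: times_ennreal.rep_eq ctype_eq)
  also have "\<dots> = enn2ereal (\<Sum>l<L. ennreal (ctype n M u (x l)) * (\<integral>\<^sup>+ y. g y \<partial>chan1 s2 (x l)))"
    by (rule sum_enn2ereal) simp
  finally show ?thesis .
qed

lemma threshold_bound:
  assumes g [measurable]: "g \<in> borel_measurable borel" and del: "del < 1" and theta: "theta s2 n M g B u < del"
  shows "ereal B \<le> ereal (1 / (1 - del)) *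
           (\<Sum>l<L. ereal (ctype n M u (x l)) * enn2ereal (\<integral>\<^sup>+ w. g (x l + w) \<partial>noiseW s2))"
proof -
  define S where "S = (\<Sum>l<L. ennreal (ctype n M u (x l)) * (\<integral>\<^sup>+ y. g y \<partial>chan1 s2 (x l)))"
  have "(\<Sum>l<L. ereal (ctype n M u (x l)) * enn2ereal (\<integral>\<^sup>+ w. g (x l + w) \<partial>noiseW s2))
      = enn2ereal S"
    unfolding S_def by (rule sum_ereal_noise_mean[OF g])
  moreover have "ereal B \<le> ereal (1 / (1 - del)) * enn2ereal S"
  proof (cases "B > 0 \<and> S \<noteq> top")
    case True
    then obtain s where s: "S = ennreal s" "s \<ge> 0" by (cases S) auto
    have "B * (1 - theta_i s2 n g B u i) \<le> s" if "i < M" for i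
    proof -
      interpret prob_space "chanN s2 n (u i)" by (rule prob_space_chanN[OF s2_pos])
      have "theta_i s2 n g B u i \<le> 1" by (simp add: theta_i_def)
      then show ?thesis
        using markov_codeword[OF g _ that] True s by (simp add: S_def[symmetric])
    qed
    then have "(\<Sum>i<M. B * (1 - theta_i s2 n g B u i)) \<le> (\<Sum>i<M. s)"
      by (intro sum_mono) simp
    then have "B * (1 - theta s2 n M g B u) \<le> s"
      using M_pos by (simp add: theta_def sum_subtractf sum_distrib_left[symmetric] field_simps)
    moreover have "B * (1 - del) \<le> B * (1 - theta s2 n M g B u)"
      using theta True by (intro mult_left_mono) auto
    ultimately have "B \<le> s / (1 - del)"
      using del by (simp add: le_divide_eq)
    then show ?thesis
      using s del by simp
  next
    case False
    have "0 < ereal (1 / (1 - del))" using del by simp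
    moreover have "0 \<le> enn2ereal S" by simp
    ultimately show ?thesis
      using False by (cases "B > 0") (auto intro: order_trans[of _ 0] simp: ereal_zero_le_0_iff)
  qed
  ultimately show ?thesis by simp
qed

lemma rate_bound:
  assumes "(\<Sum>l<L. p l) > 0" and Pc_pos: "\<forall>l<L. ctype n M u (x l) > 0"
  shows "log 2 (real M) / real n \<le> multinomial_rate_bound n L (\<lambda>l. ctype n M u (x l))"
proof (rule log_le_multinomial_rate_bound[OF n_pos _ _ sum_symbol_count _ card_code_le_multinomial[OF assms(1)] ctype_eq])
  show "L \<ge> 1"
    using codeword_symbols[of 0 0] M_pos n_pos by auto
  show "symbol_count l \<ge> 1" if "l < L" for l
    using Pc_pos that ctype_eq[OF that] by (auto simp: zero_less_divide_iff)
qed (use M_pos in auto)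

lemma error_bound:
  assumes err: "err s2 n M u D < eps" and S: "(\<Sum>j<L. p j) > 0"
  shows "eps \<ge> 1 - (if (\<exists>l<L. ctype n M u (x l) > 0 \<and> p l / (\<Sum>j<L. p j) = 0) then 0
           else exp (- real n * Hln L (\<lambda>l. ctype n M u (x l))
                     - real n * Dln L (\<lambda>l. ctype n M u (x l)) (\<lambda>l. p l / (\<Sum>j<L. p j))
                     + real n * ln (\<Sum>j<L. p j)))"
proof (cases "\<exists>l<L. ctype n M u (x l) > 0 \<and> p l / (\<Sum>j<L. p j) = 0")
  case True
  then obtain l where "l < L" "symbol_count l \<noteq> 0" "p l = 0"
    using S ctype_eq by fastforce
  then have "(\<Prod>l<L. p l ^ symbol_count l) = 0"
    by (auto simp: prod_zero_iff)
  with True err show ?thesis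
    unfolding err_eq by simp
next
  case False
  have "p l > 0" if "l < L" "ctype n M u (x l) > 0" for l
  proof -
    have "p l \<noteq> 0" using False S that by auto
    moreover have "p l \<ge> 0" by (simp add: p_def)
    ultimately show ?thesis by simp
  qed
  then have "exp (- real n * Hln L (\<lambda>l. ctype n M u (x l))
            - real n * Dln L (\<lambda>l. ctype n M u (x l)) (\<lambda>l. p l / (\<Sum>j<L. p j))
            + real n * ln (\<Sum>j<L. p j)) = (\<Prod>l<L. p l ^ symbol_count l)"
    using exp_entropy_divergence_eq_prod[OF n_pos sum_symbol_count ctype_eq S] by blast
  then show ?thesis
    using err unfolding if_not_P[OF False] err_eq by simp
qed

end

theorem theorem1:
  fixes n M L :: nat and x :: "nat \<Rightarrow> complex" and A s2 eps B del :: real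
    and g :: "complex \<Rightarrow> ennreal"
    and u :: "nat \<Rightarrow> nat \<Rightarrow> complex" and D :: "nat \<Rightarrow> nat \<Rightarrow> complex set"
  assumes "n \<ge> 1" and "M \<ge> 1"
    and "inj_on x {..<L}"
    and "A > 0" and "s2 > 0"
    and "g \<in> borel_measurable borel"
    and "eps > 0" and "del < 1"
    and "is_code_full s2 n M L x A g eps B del u D"
    and "homogeneous s2 n M L x u D"
    and "(\<Sum>j<L. measure (chan1 s2 (x j)) (Eset s2 n M x D j)) > 0"
  shows "let Pc = (\<lambda>l. ctype n M u (x l));
             p = (\<lambda>l. measure (chan1 s2 (x l)) (Eset s2 n M x D l));
             Q = (\<lambda>l. p l / (\<Sum>j<L. p j))
         in ((\<forall>l<L. Pc l > 0) \<longrightarrow>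
              log 2 (real M) / real n \<le> H2 L Pc
                + 1 / (real n)\<^sup>2 * (1/12 - (\<Sum>l<L. 1 / (12 * Pc l + 1)))
                + 1 / real n * (log 2 (sqrt (2 * pi)) - (\<Sum>l<L. log 2 (sqrt (2 * pi * Pc l))))
                - log 2 (real n) / real n * ((real L - 1) / 2))
          \<and> ereal B \<le> ereal (1 / (1 - del)) *
               (\<Sum>l<L. ereal (Pc l) * enn2ereal (\<integral>\<^sup>+ w. g (x l + w) \<partial>noiseW s2))
          \<and> eps \<ge> 1 - (if (\<exists>l<L. Pc l > 0 \<and> Q l = 0) then 0
                       else exp (- real n * Hln L Pc - real n * Dln L Pc Q
                                 + real n * ln (\<Sum>j<L. p j)))"
proof -
  have err: "err s2 n M u D < eps" and theta: "theta s2 n M g B u < del"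
    and code: "is_code n M L x A u D"
    using assms(9) by (auto simp: is_code_full_def)
  interpret homogeneous_code s2 n M L x A u D
    using assms(1-3,5,10) code by unfold_locales
  have S: "(\<Sum>j<L. p j) > 0"
    using assms(11) by (simp add: p_def)
  show ?thesis
    unfolding Let_def p_def[symmetric]
    using rate_bound[OF S] threshold_bound[OF assms(6,8) theta] error_bound[OF err S]
    by (simp add: multinomial_rate_bound_def)
qed

end
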